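(* Let $\eta$ satisfy (A1) and (A2). Then $\lambda_{crit}(\eta)\ge0$, and: if $\lambda<\lambda_{crit}(\eta)$ then $\Phi_k(\lambda)(i,j)<\infty$ for all $i,j\in[d]$ and $k\in\mathbb Z$, $\eta$-a.s.; if $\lambda>\lambda_{crit}(\eta)$ then $\Phi_k(\lambda)(i,j)=\infty$ for all $i,j\in[d]$ and $k\in\mathbb Z$, $\eta$-a.s.
   Context: Setting. Fix $d\ge1$, $[d]=\{1,\dots,d\}$. $\Sigma$ is the set of triples $(q,r,p)$ of nonnegative $d\times d$ matrices with $(q+r+p)\mathbf 1=\mathbf 1$; $\Omega=\Sigma^{\mathbb Z}$, $\omega_n=(q_n,r_n,p_n)$, shift $(\theta\omega)_k=\omega_{k+1}$. For $\omega\in\Omega$, $P^{(x,i)}_\omega$ is the law of the Markov chain $(X_n,Y_n)$ on $\mathbb Z\times[d]$ started at $(x,i)$ which from $(k,i)$ jumps to $(k-1,j)$, $(k,j)$, $(k+1,j)$ with probabilities $q_k(i,j)$, $r_k(i,j)$, $p_k(i,j)$; $E^{(x,i)}_\omega$ its expectation; $T_x=\inf\{n\ge0:X_n=x\}$. For $\kappa>0$, $\Sigma_\kappa$ is the set of $(q,r,p)\in\Sigma$ with $\sum_jq(i,j)\ge\kappa$, $\sum_jp(i,j)\ge\kappa$ for all $i$, and $((I-r)^{-1}q)(i,j)\ge\kappa$, $((I-r)^{-1}p)(i,j)\ge\kappa$ for all $i,j$; $\Omega_\kappa=\Sigma_\kappa^{\mathbb Z}$. (A1): $\eta$ is stationary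 and ergodic under $\theta$. (A2): $\eta(\Omega_\kappa)=1$ for some $\kappa>0$. $\Phi_k(\lambda)$ is the $d\times d$ matrix with $\Phi_k(\lambda)(i,j)=E^{(k,i)}_\omega[e^{\lambda T_{k+1}}\mathbf 1\{T_{k+1}<\infty,Y_{T_{k+1}}=j\}]\in[0,\infty]$, and $\lambda_{crit}(\eta)=\sup\{\lambda:\eta(\max_i\sum_j\Phi_0(\lambda)(i,j)<\infty)=1\}$. *)

theory Defs
  imports "HOL-Probability.Probability"
begin

text \<open>The index set [d] is a finite type 'd (so d = CARD('d) \<ge> 1).
  A site configuration is a triple (q, r, p) of d x d real matrices.\<close>

type_synonym 'd site = "(real^'d^'d) \<times> (real^'d^'d) \<times> (real^'d^'d)"
type_synonym 'd env = "int \<Rightarrow> 'd site"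

definition Sigma_set :: "'d::finite site set" where
  "Sigma_set = {(q, r, p). (\<forall>i j. q $ i $ j \<ge> 0 \<and> r $ i $ j \<ge> 0 \<and> p $ i $ j \<ge> 0)
      \<and> (\<forall>i. (\<Sum>j\<in>UNIV. q $ i $ j + r $ i $ j + p $ i $ j) = 1)}"

definition Sigma_kappa :: "real \<Rightarrow> 'd::finite site set" where
  "Sigma_kappa \<kappa> = {(q, r, p). (q, r, p) \<in> Sigma_set
      \<and> (\<forall>i. (\<Sum>j\<in>UNIV. q $ i $ j) \<ge> \<kappa> \<and> (\<Sum>j\<in>UNIV. p $ i $ j) \<ge> \<kappa>)
      \<and> (\<forall>i j. (matrix_inv (mat 1 - r) ** q) $ i $ j \<ge> \<kappa>
             \<and> (matrix_inv (mat 1 - r) ** p) $ i $ j \<ge> \<kappa>)}"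

definition env_space :: "'d::finite env measure" where
  "env_space = PiM UNIV (\<lambda>_. borel)"

definition shift :: "'d env \<Rightarrow> 'd env" where
  "shift \<omega> = (\<lambda>k. \<omega> (k + 1))"

definition stationary_ergodic :: "'d::finite env measure \<Rightarrow> bool" where
  "stationary_ergodic \<eta> \<longleftrightarrow>
     shift \<in> \<eta> \<rightarrow>\<^sub>M \<eta> \<and> distr \<eta> \<eta> shift = \<eta>
     \<and> (\<forall>A\<in>sets \<eta>. shift -` A \<inter> space \<eta> = A \<longrightarrow> measure \<eta> A = 0 \<or> measure \<eta> A = 1)"

definition qm :: "'d env \<Rightarrow> int \<Rightarrow> real^'d^'d" where "qm \<omega> x = fst (\<omega> x)"
definition rm :: "'d env \<Rightarrow> int \<Rightarrow> real^'d^'d" where "rm \<omega> x = fst (snd (\<omega> x))"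
definition pm :: "'d env \<Rightarrow> int \<Rightarrow> real^'d^'d" where "pm \<omega> x = snd (snd (\<omega> x))"

text \<open>hitp \<omega> t n x i j = P_\<omega>^{(x,i)} (T_t = n, Y_n = j), where T_t = inf{n \<ge> 0. X_n = t},
  defined via the first-step (Markov) decomposition of the path law.\<close>
primrec hitp :: "'d::finite env \<Rightarrow> int \<Rightarrow> nat \<Rightarrow> int \<Rightarrow> 'd \<Rightarrow> 'd \<Rightarrow> real" where
  "hitp \<omega> t 0 x i j = (if x = t \<and> i = j then 1 else 0)"
| "hitp \<omega> t (Suc n) x i j = (if x = t then 0 else
      (\<Sum>j'\<in>UNIV. qm \<omega> x $ i $ j' * hitp \<omega> t n (x - 1) j' j
                 + rm \<omega> x $ i $ j' * hitp \<omega> t n x j' j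
                 + pm \<omega> x $ i $ j' * hitp \<omega> t n (x + 1) j' j))"

text \<open>Phi_k(\<lambda>)(i,j) = E^{(k,i)}[e^{\<lambda> T_{k+1}} 1{T_{k+1} < \<infinity>, Y_{T_{k+1}} = j}] \<in> [0,\<infinity>].\<close>
definition Phi :: "'d::finite env \<Rightarrow> int \<Rightarrow> real \<Rightarrow> 'd \<Rightarrow> 'd \<Rightarrow> ennreal" where
  "Phi \<omega> k lam i j = (\<Sum>n. ennreal (exp (lam * real n) * hitp \<omega> (k + 1) n k i j))"

definition lambda_crit :: "'d::finite env measure \<Rightarrow> ereal" where
  "lambda_crit \<eta> = Sup {ereal lam | lam. AE \<omega> in \<eta>. Max (range (\<lambda>i. \<Sum>j\<in>UNIV. Phi \<omega> 0 lam i j)) < \<infinity>}"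

end

theory Submission
  imports Defs
begin

text \<open>
  Uniform ellipticity lets infinite entries of Phi propagate to the right. The row sums of r are
  at most 1 - 2 kappa, so I - r is invertible, and positivity of (I - r)^-1 q and (I - r)^-1 p
  means that from every state some state reachable by horizontal moves steps down, respectively
  up, into any prescribed state with positive probability. Splicing such moves around an
  excursion from level k to level k + 1 bounds every entry of Phi_(k+1)(lam) from below by a
  positive multiple of any entry of Phi_k(lam). Hence one infinite entry at level k makes every
  entry at every level k' > k infinite.

  If lam > lambda_crit, then with positive probability Phi_0(lam) has an infinite entry. By
  stationarity and ergodicity, levels with an infinite entry then occur almost surely arbitrarily
  far to the left, so all entries at all levels are infinite. If lam < lambda_crit, finiteness at
  level 0 for some larger exponent carries over to lam by monotonicity and to every level by
  stationarity. Finally lambda_crit \<ge> 0 because the entries of Phi_k(0) are hitting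
  probabilities.
\<close>

section \<open>Hitting probabilities\<close>

lemma
  assumes "range \<omega> \<subseteq> Sigma_set"
  shows transition_nonneg: "0 \<le> qm \<omega> x $ i $ j" "0 \<le> rm \<omega> x $ i $ j" "0 \<le> pm \<omega> x $ i $ j"
    and transition_row_sum: "(\<Sum>j\<in>UNIV. qm \<omega> x $ i $ j + rm \<omega> x $ i $ j + pm \<omega> x $ i $ j) = 1"
proof -
  have "\<omega> x \<in> Sigma_set" using assms by blast
  then show "0 \<le> qm \<omega> x $ i $ j" "0 \<le> rm \<omega> x $ i $ j" "0 \<le> pm \<omega> x $ i $ j"
    and "(\<Sum>j\<in>UNIV. qm \<omega> x $ i $ j + rm \<omega> x $ i $ j + pm \<omega> x $ i $ j) = 1"
    by (cases "\<omega> x", auto simp: Sigma_set_def qm_def rm_def pm_def)+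
qed

lemma hitp_nonneg:
  assumes "range \<omega> \<subseteq> Sigma_set"
  shows "0 \<le> hitp \<omega> t n x i j"
  by (induction n arbitrary: x i)
    (auto intro!: sum_nonneg add_nonneg_nonneg mult_nonneg_nonneg transition_nonneg[OF assms])

lemma sum_hitp_le_1:
  assumes "range \<omega> \<subseteq> Sigma_set"
  shows "(\<Sum>n<N. \<Sum>j\<in>UNIV. hitp \<omega> t n x i j) \<le> 1"
proof (induction N arbitrary: x i)
  case 0
  then show ?case by simp
next
  case (Suc N)
  let ?F = "\<lambda>y j'. \<Sum>n<N. \<Sum>j\<in>UNIV. hitp \<omega> t n y j' j"
  have first_step: "(\<Sum>n<Suc N. \<Sum>j\<in>UNIV. hitp \<omega> t n x i j)
      = (\<Sum>j\<in>UNIV. hitp \<omega> t 0 x i j) + (\<Sum>n<N. \<Sum>j\<in>UNIV. hitp \<omega> t (Suc n) x i j)"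
    by (rule sum.lessThan_Suc_shift)
  show ?case
  proof (cases "x = t")
    case True
    then show ?thesis unfolding first_step by simp
  next
    case False
    have "(\<Sum>n<Suc N. \<Sum>j\<in>UNIV. hitp \<omega> t n x i j) = (\<Sum>n<N. \<Sum>j\<in>UNIV. hitp \<omega> t (Suc n) x i j)"
      using False unfolding first_step by simp
    also have "\<dots> = (\<Sum>j'\<in>UNIV. qm \<omega> x $ i $ j' * ?F (x - 1) j' + rm \<omega> x $ i $ j' * ?F x j'
        + pm \<omega> x $ i $ j' * ?F (x + 1) j')"
      using False
      by (simp add: sum.distrib sum_distrib_left sum.swap[of _ "{..<N}" UNIV]
          sum.swap[of "\<lambda>j j'. _ j' * hitp \<omega> t _ _ j' j"])
    also have "\<dots> \<le> (\<Sum>j'\<in>UNIV. qm \<omega> x $ i $ j' * 1 + rm \<omega> x $ i $ j' * 1 + pm \<omega> x $ i $ j' * 1)"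
      by (intro sum_mono add_mono mult_left_mono Suc transition_nonneg[OF assms])
    also have "\<dots> = 1"
      using transition_row_sum[OF assms] by simp
    finally show ?thesis .
  qed
qed

lemma hitp_Suc_lower_bounds:
  assumes "range \<omega> \<subseteq> Sigma_set" and "x \<noteq> t"
  shows "qm \<omega> x $ i $ j' * hitp \<omega> t n (x - 1) j' j \<le> hitp \<omega> t (Suc n) x i j"
    and "rm \<omega> x $ i $ j' * hitp \<omega> t n x j' j \<le> hitp \<omega> t (Suc n) x i j"
    and "pm \<omega> x $ i $ j' * hitp \<omega> t n (x + 1) j' j \<le> hitp \<omega> t (Suc n) x i j"
proof -
  have nonneg: "0 \<le> qm \<omega> x $ i $ j' * hitp \<omega> t n (x - 1) j' j"
    "0 \<le> rm \<omega> x $ i $ j' * hitp \<omega> t n x j' j" "0 \<le> pm \<omega> x $ i $ j' * hitp \<omega> t n (x + 1) j' j"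
    for i j' j
    by (simp_all add: transition_nonneg[OF assms(1)] hitp_nonneg[OF assms(1)])
  have "qm \<omega> x $ i $ j' * hitp \<omega> t n (x - 1) j' j + rm \<omega> x $ i $ j' * hitp \<omega> t n x j' j
      + pm \<omega> x $ i $ j' * hitp \<omega> t n (x + 1) j' j \<le> hitp \<omega> t (Suc n) x i j"
    using assms(2) by (simp, intro member_le_sum) (simp_all add: nonneg add_nonneg_nonneg)
  then show "qm \<omega> x $ i $ j' * hitp \<omega> t n (x - 1) j' j \<le> hitp \<omega> t (Suc n) x i j"
    and "rm \<omega> x $ i $ j' * hitp \<omega> t n x j' j \<le> hitp \<omega> t (Suc n) x i j"
    and "pm \<omega> x $ i $ j' * hitp \<omega> t n (x + 1) j' j \<le> hitp \<omega> t (Suc n) x i j"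
    using nonneg[of i j' j] by linarith+
qed

lemma hitp_concat_le:
  assumes "range \<omega> \<subseteq> Sigma_set" and "x \<le> m" and "m < t"
  shows "hitp \<omega> m n x i b * hitp \<omega> t L m b j \<le> hitp \<omega> t (n + L) x i j"
  using assms(2)
proof (induction n arbitrary: x i)
  case 0
  then show ?case using hitp_nonneg[OF assms(1)] by auto
next
  case (Suc n)
  show ?case
  proof (cases "x = m")
    case True
    then show ?thesis using hitp_nonneg[OF assms(1), of t "Suc n + L" x i j] by simp
  next
    case False
    with Suc.prems assms(3) have "x < m" "x \<noteq> t" by simp_all
    let ?H = "hitp \<omega> t L m b j"
    have "hitp \<omega> m (Suc n) x i b * ?H
      = (\<Sum>j'\<in>UNIV. qm \<omega> x $ i $ j' * (hitp \<omega> m n (x - 1) j' b * ?H)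
          + rm \<omega> x $ i $ j' * (hitp \<omega> m n x j' b * ?H)
          + pm \<omega> x $ i $ j' * (hitp \<omega> m n (x + 1) j' b * ?H))"
      using False by (simp add: sum_distrib_right, intro sum.cong refl, simp add: algebra_simps)
    also have "\<dots> \<le> (\<Sum>j'\<in>UNIV. qm \<omega> x $ i $ j' * hitp \<omega> t (n + L) (x - 1) j' j
          + rm \<omega> x $ i $ j' * hitp \<omega> t (n + L) x j' j
          + pm \<omega> x $ i $ j' * hitp \<omega> t (n + L) (x + 1) j' j)"
      using \<open>x < m\<close> by (intro sum_mono add_mono mult_left_mono Suc.IH transition_nonneg[OF assms(1)]) auto
    also have "\<dots> = hitp \<omega> t (Suc n + L) x i j"
      using \<open>x \<noteq> t\<close> by simp
    finally show ?thesis .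
  qed
qed

lemma hitp_along_r_path:
  assumes "range \<omega> \<subseteq> Sigma_set" and "(\<lambda>i j. 0 < rm \<omega> x $ i $ j)\<^sup>*\<^sup>* i i'"
  shows "\<exists>m c. 0 < c \<and> (\<forall>n j t. t \<noteq> x \<longrightarrow> c * hitp \<omega> t n x i' j \<le> hitp \<omega> t (n + m) x i j)"
  using assms(2)
proof (induction rule: rtranclp_induct)
  case base
  show ?case by (rule exI[of _ 0], rule exI[of _ 1]) simp
next
  case (step i' i'')
  then obtain m c where "0 < c"
    and IH: "\<And>n j t. t \<noteq> x \<Longrightarrow> c * hitp \<omega> t n x i' j \<le> hitp \<omega> t (n + m) x i j"
    by blast
  have "c * rm \<omega> x $ i' $ i'' * hitp \<omega> t n x i'' j \<le> hitp \<omega> t (n + Suc m) x i j"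
    if "t \<noteq> x" for n j t
  proof -
    have "c * rm \<omega> x $ i' $ i'' * hitp \<omega> t n x i'' j \<le> c * hitp \<omega> t (Suc n) x i' j"
      unfolding mult.assoc using \<open>0 < c\<close> that
      by (intro mult_left_mono hitp_Suc_lower_bounds(2)[OF assms(1)]) auto
    also have "\<dots> \<le> hitp \<omega> t (n + Suc m) x i j"
      using IH[OF that, of "Suc n"] by simp
    finally show ?thesis .
  qed
  moreover have "0 < c * rm \<omega> x $ i' $ i''" using \<open>0 < c\<close> step.hyps(2) by simp
  ultimately show ?case by blast
qed

section \<open>Substochastic matrices\<close>

lemma substochastic_fixpoint_eq_0:
  fixes r :: "real^'n::finite^'n" and w :: "'n \<Rightarrow> real"
  assumes nonneg: "\<And>i j. 0 \<le> r $ i $ j" and rows: "\<And>i. (\<Sum>j\<in>UNIV. r $ i $ j) \<le> \<rho>" and "\<rho> < 1"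
    and closed: "\<And>i j. i \<in> R \<Longrightarrow> 0 < r $ i $ j \<Longrightarrow> j \<in> R"
    and fixpoint: "\<And>i. i \<in> R \<Longrightarrow> w i = (\<Sum>j\<in>UNIV. r $ i $ j * w j)"
    and "i \<in> R"
  shows "w i = 0"
proof -
  define \<mu> where "\<mu> = Max ((\<lambda>i. \<bar>w i\<bar>) ` R)"
  have le_\<mu>: "\<bar>w i\<bar> \<le> \<mu>" if "i \<in> R" for i
    unfolding \<mu>_def using that by (intro Max_ge) auto
  have "\<mu> \<in> (\<lambda>i. \<bar>w i\<bar>) ` R"
    unfolding \<mu>_def using \<open>i \<in> R\<close> by (intro Max_in) auto
  then obtain i\<^sub>m where "i\<^sub>m \<in> R" and "\<bar>w i\<^sub>m\<bar> = \<mu>" by auto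
  have "0 \<le> \<mu>" using le_\<mu>[OF \<open>i \<in> R\<close>] by linarith
  have "\<mu> = \<bar>\<Sum>j\<in>UNIV. r $ i\<^sub>m $ j * w j\<bar>"
    using \<open>i\<^sub>m \<in> R\<close> \<open>\<bar>w i\<^sub>m\<bar> = \<mu>\<close> fixpoint by simp
  also have "\<dots> \<le> (\<Sum>j\<in>UNIV. r $ i\<^sub>m $ j * \<mu>)"
  proof (rule order_trans[OF sum_abs sum_mono])
    fix j
    show "\<bar>r $ i\<^sub>m $ j * w j\<bar> \<le> r $ i\<^sub>m $ j * \<mu>"
    proof (cases "r $ i\<^sub>m $ j = 0")
      case False
      then have "j \<in> R" using closed[OF \<open>i\<^sub>m \<in> R\<close>] nonneg[of i\<^sub>m j] by simp
      then show ?thesis using le_\<mu> nonneg[of i\<^sub>m j] by (simp add: abs_mult mult_left_mono)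
    qed simp
  qed
  also have "\<dots> \<le> \<rho> * \<mu>"
    using rows[of i\<^sub>m] \<open>0 \<le> \<mu>\<close> by (simp add: sum_distrib_right[symmetric] mult_right_mono)
  finally have "\<mu> = 0" using \<open>\<rho> < 1\<close> \<open>0 \<le> \<mu>\<close> by (simp add: mult_le_cancel_right1)
  then show ?thesis using le_\<mu>[OF \<open>i \<in> R\<close>] by simp
qed

lemma matrix_inv_right:
  fixes A :: "'a::semiring_1^'n^'m"
  assumes "invertible A"
  shows "A ** matrix_inv A = mat 1"
  using someI_ex[OF assms[unfolded invertible_def]] unfolding matrix_inv_def by blast

lemma mat_1_row_sum: "(\<Sum>j\<in>UNIV. mat 1 $ i $ j * (v j :: 'a::semiring_1)) = v i"
  unfolding mat_def by (simp add: if_distrib[of "\<lambda>x. x * _"] cong: if_cong)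

lemma invertible_id_minus_substochastic:
  fixes r :: "real^'n::finite^'n"
  assumes "\<And>i j. 0 \<le> r $ i $ j" and "\<And>i. (\<Sum>j\<in>UNIV. r $ i $ j) \<le> \<rho>" and "\<rho> < 1"
  shows "invertible (mat 1 - r)"
proof -
  have "v = 0" if "(mat 1 - r) *v v = 0" for v
  proof -
    have "v $ i = (\<Sum>j\<in>UNIV. r $ i $ j * v $ j)" for i
      using arg_cong[OF that, of "\<lambda>u. u $ i"]
      by (simp add: matrix_vector_mult_def left_diff_distrib sum_subtractf mat_1_row_sum)
    then have "v $ i = 0" for i
      using substochastic_fixpoint_eq_0[OF assms, of UNIV "\<lambda>i. v $ i"] by blast
    then show ?thesis by (simp add: vec_eq_iff)
  qed
  then have "inj ((*v) (mat 1 - r))"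
    by (intro injI) (metis eq_iff_diff_eq_0 matrix_vector_mult_diff_distrib)
  then show ?thesis
    by (simp add: invertible_left_inverse matrix_left_invertible_injective)
qed

lemma resolvent_entry_pos_imp_reach:
  fixes r B :: "real^'n::finite^'n"
  assumes "\<And>i j. 0 \<le> r $ i $ j" and "\<And>i. (\<Sum>j\<in>UNIV. r $ i $ j) \<le> \<rho>" and "\<rho> < 1"
    and "\<And>i j. 0 \<le> B $ i $ j" and "0 < (matrix_inv (mat 1 - r) ** B) $ i $ a"
  shows "\<exists>i'. (\<lambda>i j. 0 < r $ i $ j)\<^sup>*\<^sup>* i i' \<and> 0 < B $ i' $ a"
proof (rule ccontr)
  let ?R = "{i'. (\<lambda>i j. 0 < r $ i $ j)\<^sup>*\<^sup>* i i'}"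
  assume "\<not> ?thesis"
  then have B_vanishes: "B $ i' $ a = 0" if "i' \<in> ?R" for i'
    using that assms(4)[of i' a] by force
  define w where "w j = (matrix_inv (mat 1 - r) ** B) $ j $ a" for j
  have inverse: "(mat 1 - r) ** (matrix_inv (mat 1 - r) ** B) = B"
    by (simp add: matrix_mul_assoc matrix_inv_right[OF invertible_id_minus_substochastic[OF assms(1-3)]])
  have resolvent_eq: "B $ i' $ a = w i' - (\<Sum>j\<in>UNIV. r $ i' $ j * w j)" for i'
  proof -
    have "B $ i' $ a = ((mat 1 - r) ** (matrix_inv (mat 1 - r) ** B)) $ i' $ a"
      by (simp only: inverse)
    also have "\<dots> = w i' - (\<Sum>j\<in>UNIV. r $ i' $ j * w j)"
      unfolding w_def by (simp add: matrix_matrix_mult_def left_diff_distrib sum_subtractf mat_1_row_sum)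
    finally show ?thesis .
  qed
  have "w i = 0"
  proof (rule substochastic_fixpoint_eq_0[OF assms(1-3), of ?R])
    show "w i' = (\<Sum>j\<in>UNIV. r $ i' $ j * w j)" if "i' \<in> ?R" for i'
      using resolvent_eq[of i'] B_vanishes[OF that] by simp
  qed (auto intro: rtranclp.rtrancl_into_rtrancl)
  with assms(5) show False unfolding w_def by simp
qed

section \<open>Propagation of infinite entries of Phi\<close>

lemma Sigma_kappa_subset_Sigma_set: "Sigma_kappa \<kappa> \<subseteq> Sigma_set"
  by (auto simp: Sigma_kappa_def)

lemma Sigma_kappa_r_path_then_step:
  assumes "range \<omega> \<subseteq> Sigma_kappa \<kappa>" and "0 < \<kappa>"
  shows "\<exists>i'. (\<lambda>i j. 0 < rm \<omega> x $ i $ j)\<^sup>*\<^sup>* i i' \<and> 0 < qm \<omega> x $ i' $ a"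
    and "\<exists>i'. (\<lambda>i j. 0 < rm \<omega> x $ i $ j)\<^sup>*\<^sup>* i i' \<and> 0 < pm \<omega> x $ i' $ a"
proof -
  have stochastic: "range \<omega> \<subseteq> Sigma_set"
    using assms(1) Sigma_kappa_subset_Sigma_set by blast
  have "\<omega> x \<in> Sigma_kappa \<kappa>" using assms(1) by blast
  then have q_mass: "\<kappa> \<le> (\<Sum>j\<in>UNIV. qm \<omega> x $ i' $ j)" and p_mass: "\<kappa> \<le> (\<Sum>j\<in>UNIV. pm \<omega> x $ i' $ j)"
    and q_resolvent: "\<kappa> \<le> (matrix_inv (mat 1 - rm \<omega> x) ** qm \<omega> x) $ i' $ a"
    and p_resolvent: "\<kappa> \<le> (matrix_inv (mat 1 - rm \<omega> x) ** pm \<omega> x) $ i' $ a" for i'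
    by (cases "\<omega> x", auto simp: Sigma_kappa_def qm_def rm_def pm_def)+
  have r_mass: "(\<Sum>j\<in>UNIV. rm \<omega> x $ i' $ j) \<le> 1 - 2 * \<kappa>" for i'
    using transition_row_sum[OF stochastic, of x i'] q_mass[of i'] p_mass[of i']
    by (simp add: sum.distrib)
  show "\<exists>i'. (\<lambda>i j. 0 < rm \<omega> x $ i $ j)\<^sup>*\<^sup>* i i' \<and> 0 < qm \<omega> x $ i' $ a"
    and "\<exists>i'. (\<lambda>i j. 0 < rm \<omega> x $ i $ j)\<^sup>*\<^sup>* i i' \<and> 0 < pm \<omega> x $ i' $ a"
    using q_resolvent[of i] p_resolvent[of i] assms(2)
    by (auto intro!: resolvent_entry_pos_imp_reach[of _ "1 - 2 * \<kappa>"] r_mass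
        transition_nonneg[OF stochastic])
qed

lemma hitp_step_down_lower_bound:
  assumes "range \<omega> \<subseteq> Sigma_kappa \<kappa>" and "0 < \<kappa>"
  shows "\<exists>m c. 0 < c \<and>
    (\<forall>n j t. t \<noteq> x \<longrightarrow> c * hitp \<omega> t n (x - 1) a j \<le> hitp \<omega> t (n + m) x i j)"
proof -
  have stochastic: "range \<omega> \<subseteq> Sigma_set"
    using assms(1) Sigma_kappa_subset_Sigma_set by blast
  obtain i' where "(\<lambda>i j. 0 < rm \<omega> x $ i $ j)\<^sup>*\<^sup>* i i'" and "0 < qm \<omega> x $ i' $ a"
    using Sigma_kappa_r_path_then_step(1)[OF assms] by blast
  then obtain m c where "0 < c"
    and horizontal: "\<And>n j t. t \<noteq> x \<Longrightarrow> c * hitp \<omega> t n x i' j \<le> hitp \<omega> t (n + m) x i j"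
    using hitp_along_r_path[OF stochastic] by blast
  have "c * qm \<omega> x $ i' $ a * hitp \<omega> t n (x - 1) a j \<le> hitp \<omega> t (n + Suc m) x i j"
    if "t \<noteq> x" for n j t
  proof -
    have "c * qm \<omega> x $ i' $ a * hitp \<omega> t n (x - 1) a j \<le> c * hitp \<omega> t (Suc n) x i' j"
      unfolding mult.assoc using \<open>0 < c\<close> that
      by (intro mult_left_mono hitp_Suc_lower_bounds(1)[OF stochastic]) auto
    also have "\<dots> \<le> hitp \<omega> t (n + Suc m) x i j"
      using horizontal[OF that, of "Suc n"] by (simp del: hitp.simps)
    finally show ?thesis .
  qed
  moreover have "0 < c * qm \<omega> x $ i' $ a"
    using \<open>0 < c\<close> \<open>0 < qm \<omega> x $ i' $ a\<close> by simp
  ultimately show ?thesis by blast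
qed

lemma hitp_step_up_lower_bound:
  assumes "range \<omega> \<subseteq> Sigma_kappa \<kappa>" and "0 < \<kappa>"
  shows "\<exists>m c. 0 < c \<and> c \<le> hitp \<omega> (x + 1) m x b j"
proof -
  have stochastic: "range \<omega> \<subseteq> Sigma_set"
    using assms(1) Sigma_kappa_subset_Sigma_set by blast
  obtain b' where "(\<lambda>i j. 0 < rm \<omega> x $ i $ j)\<^sup>*\<^sup>* b b'" and "0 < pm \<omega> x $ b' $ j"
    using Sigma_kappa_r_path_then_step(2)[OF assms] by blast
  then obtain m c where "0 < c"
    and horizontal: "\<And>n j t. t \<noteq> x \<Longrightarrow> c * hitp \<omega> t n x b' j \<le> hitp \<omega> t (n + m) x b j"
    using hitp_along_r_path[OF stochastic] by blast
  have "pm \<omega> x $ b' $ j \<le> hitp \<omega> (x + 1) (Suc 0) x b' j"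
    using hitp_Suc_lower_bounds(3)[OF stochastic, of x "x + 1" b' j 0 j] by simp
  then have "c * pm \<omega> x $ b' $ j \<le> c * hitp \<omega> (x + 1) (Suc 0) x b' j"
    using \<open>0 < c\<close> by simp
  also have "\<dots> \<le> hitp \<omega> (x + 1) (Suc m) x b j"
    using horizontal[of "x + 1" "Suc 0"] by simp
  finally show ?thesis
    using \<open>0 < c\<close> \<open>0 < pm \<omega> x $ b' $ j\<close> by (intro exI[of _ "Suc m"] exI[of _ "c * pm \<omega> x $ b' $ j"]) simp
qed

lemma hitp_next_level_lower_bound:
  assumes "range \<omega> \<subseteq> Sigma_kappa \<kappa>" and "0 < \<kappa>"
  shows "\<exists>c D. 0 < c \<and> (\<forall>n. c * hitp \<omega> (k + 1) n k a b \<le> hitp \<omega> (k + 2) (n + D) (k + 1) i j)"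
proof -
  have stochastic: "range \<omega> \<subseteq> Sigma_set"
    using assms(1) Sigma_kappa_subset_Sigma_set by blast
  obtain m\<^sub>d c\<^sub>d where "0 < c\<^sub>d" and step_down:
    "\<And>n j t. t \<noteq> k + 1 \<Longrightarrow> c\<^sub>d * hitp \<omega> t n k a j \<le> hitp \<omega> t (n + m\<^sub>d) (k + 1) i j"
    using hitp_step_down_lower_bound[OF assms, of "k + 1" a i] by auto
  obtain m\<^sub>u c\<^sub>u where "0 < c\<^sub>u" and step_up: "c\<^sub>u \<le> hitp \<omega> (k + 2) m\<^sub>u (k + 1) b j"
    using hitp_step_up_lower_bound[OF assms, of "k + 1" b j] by (auto simp: add.assoc)
  have "c\<^sub>d * c\<^sub>u * hitp \<omega> (k + 1) n k a b \<le> hitp \<omega> (k + 2) (n + (m\<^sub>u + m\<^sub>d)) (k + 1) i j" for n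
  proof -
    have "c\<^sub>d * c\<^sub>u * hitp \<omega> (k + 1) n k a b
        \<le> c\<^sub>d * (hitp \<omega> (k + 1) n k a b * hitp \<omega> (k + 2) m\<^sub>u (k + 1) b j)"
      using \<open>0 < c\<^sub>d\<close> step_up hitp_nonneg[OF stochastic, of "k + 1" n k a b]
      by (simp add: mult.assoc mult.commute[of c\<^sub>u] mult_left_mono)
    also have "\<dots> \<le> c\<^sub>d * hitp \<omega> (k + 2) (n + m\<^sub>u) k a j"
      using \<open>0 < c\<^sub>d\<close> hitp_concat_le[OF stochastic, of k "k + 1" "k + 2" n a b m\<^sub>u j]
      by (simp add: mult_left_mono)
    also have "\<dots> \<le> hitp \<omega> (k + 2) (n + (m\<^sub>u + m\<^sub>d)) (k + 1) i j"
      using step_down[of "k + 2" "n + m\<^sub>u" j] by (simp add: add.assoc)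
    finally show ?thesis .
  qed
  moreover have "0 < c\<^sub>d * c\<^sub>u"
    using \<open>0 < c\<^sub>d\<close> \<open>0 < c\<^sub>u\<close> by simp
  ultimately show ?thesis by blast
qed

lemma ennreal_suminf_eq_top_if_dominated:
  fixes f g :: "nat \<Rightarrow> ennreal"
  assumes "c \<noteq> 0" and "\<And>n. c * f n \<le> g (n + D)" and "suminf f = \<infinity>"
  shows "suminf g = \<infinity>"
proof -
  have "\<infinity> = c * suminf f"
    using assms(1,3) by (simp add: ennreal_mult_eq_top_iff)
  also have "\<dots> = (\<Sum>n. c * f n)"
    by (simp add: ennreal_suminf_cmult)
  also have "\<dots> \<le> (\<Sum>n. g (n + D))"
    by (intro suminf_le assms(2)) auto
  also have "\<dots> \<le> suminf g"
    using suminf_offset[of g D] by (simp add: add_increasing2)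
  finally show ?thesis by (simp add: top_unique)
qed

lemma Phi_eq_top_next:
  assumes "range \<omega> \<subseteq> Sigma_kappa \<kappa>" and "0 < \<kappa>" and "Phi \<omega> k lam a b = \<infinity>"
  shows "Phi \<omega> (k + 1) lam i j = \<infinity>"
proof -
  have stochastic: "range \<omega> \<subseteq> Sigma_set"
    using assms(1) Sigma_kappa_subset_Sigma_set by blast
  obtain c D where "0 < c"
    and bound: "\<And>n. c * hitp \<omega> (k + 1) n k a b \<le> hitp \<omega> (k + 2) (n + D) (k + 1) i j"
    using hitp_next_level_lower_bound[OF assms(1,2)] by blast
  have dominated: "ennreal (exp (lam * D) * c) * ennreal (exp (lam * n) * hitp \<omega> (k + 1) n k a b)
      \<le> ennreal (exp (lam * real (n + D)) * hitp \<omega> (k + 2) (n + D) (k + 1) i j)" for n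
  proof -
    have "exp (lam * D) * c * (exp (lam * n) * hitp \<omega> (k + 1) n k a b)
        = exp (lam * real (n + D)) * (c * hitp \<omega> (k + 1) n k a b)"
      by (simp add: algebra_simps exp_add[symmetric])
    also have "\<dots> \<le> exp (lam * real (n + D)) * hitp \<omega> (k + 2) (n + D) (k + 1) i j"
      using bound by simp
    finally show ?thesis
      using \<open>0 < c\<close> hitp_nonneg[OF stochastic] by (simp add: ennreal_mult[symmetric] ennreal_leI)
  qed
  have "(\<Sum>n. ennreal (exp (lam * real n) * hitp \<omega> (k + 2) n (k + 1) i j)) = \<infinity>"
    using \<open>0 < c\<close> assms(3) unfolding Phi_def
    by (intro ennreal_suminf_eq_top_if_dominated[where g = "\<lambda>n. ennreal (exp (lam * real n) * hitp \<omega> (k + 2) n (k + 1) i j)"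
          and f = "\<lambda>n. ennreal (exp (lam * real n) * hitp \<omega> (k + 1) n k a b)", OF _ dominated]) auto
  then show ?thesis by (simp add: Phi_def add.assoc)
qed

lemma Phi_eq_top_right:
  assumes "range \<omega> \<subseteq> Sigma_kappa \<kappa>" and "0 < \<kappa>" and "Phi \<omega> k lam a b = \<infinity>" and "k < k'"
  shows "Phi \<omega> k' lam i j = \<infinity>"
  using assms(4)
proof (induction k' arbitrary: i j rule: int_gr_induct)
  case base
  show ?case using Phi_eq_top_next[OF assms(1-3)] .
next
  case (step k')
  then show ?case using Phi_eq_top_next[OF assms(1,2)] by blast
qed

section \<open>Shifted environments\<close>

definition shift_by :: "int \<Rightarrow> 'd env \<Rightarrow> 'd env" where
  "shift_by k \<omega> = (\<lambda>m. \<omega> (m + k))"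

lemma shift_by_add: "shift_by a (shift_by b \<omega>) = shift_by (a + b) \<omega>"
  by (simp add: shift_by_def add.assoc add.commute[of a b])

lemma shift_eq_shift_by_1: "shift = shift_by 1"
  by (simp add: fun_eq_iff shift_def shift_by_def)

lemma hitp_shift_by: "hitp \<omega> (t + k) n (x + k) i j = hitp (shift_by k \<omega>) t n x i j"
proof (induction n arbitrary: x i)
  case 0
  then show ?case by simp
next
  case (Suc n)
  have neighbours: "x - 1 + k = x + k - 1" "x + 1 + k = x + k + 1" by simp_all
  show ?case using Suc[of "x - 1"] Suc[of "x + 1"] Suc[of x]
    by (simp add: qm_def rm_def pm_def shift_by_def neighbours)
qed

lemma Phi_shift_by: "Phi (shift_by m \<omega>) k lam i j = Phi \<omega> (k + m) lam i j"
  unfolding Phi_def hitp_shift_by[symmetric] by (simp add: algebra_simps)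

lemma borel_measurable_site:
  assumes "continuous_on UNIV g"
  shows "(\<lambda>\<omega>::'d::finite env. g (\<omega> x)) \<in> borel_measurable env_space"
  unfolding env_space_def
  by (rule measurable_compose[where f = "\<lambda>\<omega>. \<omega> x" and N = borel])
    (simp_all add: measurable_component_singleton borel_measurable_continuous_onI[OF assms])

lemma borel_measurable_transitions [measurable]:
  "(\<lambda>\<omega>. qm \<omega> x $ i $ j) \<in> borel_measurable env_space"
  "(\<lambda>\<omega>. rm \<omega> x $ i $ j) \<in> borel_measurable env_space"
  "(\<lambda>\<omega>. pm \<omega> x $ i $ j) \<in> borel_measurable env_space"
  unfolding qm_def rm_def pm_def by (intro borel_measurable_site continuous_intros)+

lemma borel_measurable_hitp [measurable]: "(\<lambda>\<omega>. hitp \<omega> t n x i j) \<in> borel_measurable env_space"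
proof (induction n arbitrary: x i)
  case 0
  then show ?case by simp
next
  case (Suc n)
  show ?case
  proof (cases "x = t")
    case False
    then show ?thesis
      by (simp, intro borel_measurable_sum borel_measurable_add borel_measurable_times Suc
          borel_measurable_transitions)
  qed simp
qed

lemma borel_measurable_Phi [measurable]: "(\<lambda>\<omega>. Phi \<omega> k lam i j) \<in> borel_measurable env_space"
  unfolding Phi_def by measurable

lemma space_env_space: "space env_space = UNIV"
  by (simp add: env_space_def space_PiM)

lemma measurable_shift_by [measurable]: "shift_by k \<in> env_space \<rightarrow>\<^sub>M env_space"
  unfolding env_space_def shift_by_def
  by (rule measurable_PiM_single'[where f = "\<lambda>i \<omega>. \<omega> (i + k)"])
    (auto intro: measurable_component_singleton simp: space_PiM)

lemma measurable_shift_by_sets_eq: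
  assumes "sets \<eta> = sets env_space"
  shows "shift_by k \<in> \<eta> \<rightarrow>\<^sub>M \<eta>"
  using measurable_shift_by measurable_cong_sets[OF assms assms] by blast

lemma distr_shift_by:
  assumes "stationary_ergodic \<eta>" and "sets \<eta> = sets env_space"
  shows "distr \<eta> \<eta> (shift_by k) = \<eta>"
proof -
  have measurable: "shift_by k \<in> \<eta> \<rightarrow>\<^sub>M \<eta>" for k
    by (rule measurable_shift_by_sets_eq[OF assms(2)])
  have "distr \<eta> \<eta> (shift_by 1) = \<eta>"
    using assms(1) by (simp add: stationary_ergodic_def shift_eq_shift_by_1)
  show ?thesis
  proof (induction k rule: int_induct[where k = 0])
    case base
    have "shift_by 0 = (\<lambda>\<omega>::'a env. \<omega>)" by (simp add: fun_eq_iff shift_by_def)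
    then show ?case by simp
  next
    case (step1 k)
    have "distr \<eta> \<eta> (shift_by (k + 1)) = distr \<eta> \<eta> (shift_by 1 \<circ> shift_by k)"
      by (simp add: comp_def shift_by_add add.commute)
    also have "\<dots> = distr (distr \<eta> \<eta> (shift_by k)) \<eta> (shift_by 1)"
      by (rule distr_distr[OF measurable measurable, symmetric])
    finally show ?case using step1.IH \<open>distr \<eta> \<eta> (shift_by 1) = \<eta>\<close> by simp
  next
    case (step2 k)
    have "distr \<eta> \<eta> (shift_by k) = distr \<eta> \<eta> (shift_by (k - 1) \<circ> shift_by 1)"
      by (simp add: comp_def shift_by_add)
    also have "\<dots> = distr (distr \<eta> \<eta> (shift_by 1)) \<eta> (shift_by (k - 1))"
      by (rule distr_distr[OF measurable measurable, symmetric])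
    finally show ?case using step2.IH \<open>distr \<eta> \<eta> (shift_by 1) = \<eta>\<close> by simp
  qed
qed

lemma AE_shift_by:
  assumes "stationary_ergodic \<eta>" and "sets \<eta> = sets env_space" and "AE \<omega> in \<eta>. P \<omega>"
  shows "AE \<omega> in \<eta>. P (shift_by k \<omega>)"
proof -
  have "shift_by k \<in> \<eta> \<rightarrow>\<^sub>M \<eta>"
    by (rule measurable_shift_by_sets_eq[OF assms(2)])
  moreover have "AE \<omega> in distr \<eta> \<eta> (shift_by k). P \<omega>"
    unfolding distr_shift_by[OF assms(1,2)] by (rule assms(3))
  ultimately show ?thesis by (rule AE_distrD)
qed

lemma shift_by_vimage_exists_le:
  "shift_by m -` {\<omega>. \<exists>k\<le>0. shift_by k \<omega> \<in> A} = {\<omega>. \<exists>k\<le>m. shift_by k \<omega> \<in> A}"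
proof (intro set_eqI iffI)
  fix \<omega> assume "\<omega> \<in> shift_by m -` {\<omega>. \<exists>k\<le>0. shift_by k \<omega> \<in> A}"
  then obtain k where "k \<le> 0" and "shift_by (k + m) \<omega> \<in> A"
    by (auto simp: shift_by_add)
  then show "\<omega> \<in> {\<omega>. \<exists>k\<le>m. shift_by k \<omega> \<in> A}"
    by (intro CollectI exI[of _ "k + m"]) auto
next
  fix \<omega> assume "\<omega> \<in> {\<omega>. \<exists>k\<le>m. shift_by k \<omega> \<in> A}"
  then obtain k where "k \<le> m" and "shift_by k \<omega> \<in> A"
    by blast
  then show "\<omega> \<in> shift_by m -` {\<omega>. \<exists>k\<le>0. shift_by k \<omega> \<in> A}"
    by (auto simp: shift_by_add intro!: exI[of _ "k - m"])
qed

lemma shift_vimage_exists: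
  "shift -` {\<omega>. \<exists>k. shift_by k \<omega> \<in> A} = {\<omega>. \<exists>k. shift_by k \<omega> \<in> A}"
proof (intro set_eqI iffI)
  fix \<omega> assume "\<omega> \<in> shift -` {\<omega>. \<exists>k. shift_by k \<omega> \<in> A}"
  then obtain k where "shift_by (k + 1) \<omega> \<in> A"
    by (auto simp: shift_eq_shift_by_1 shift_by_add)
  then show "\<omega> \<in> {\<omega>. \<exists>k. shift_by k \<omega> \<in> A}"
    by blast
next
  fix \<omega> assume "\<omega> \<in> {\<omega>. \<exists>k. shift_by k \<omega> \<in> A}"
  then obtain k where "shift_by k \<omega> \<in> A"
    by blast
  then show "\<omega> \<in> shift -` {\<omega>. \<exists>k. shift_by k \<omega> \<in> A}"
    by (auto simp: shift_eq_shift_by_1 shift_by_add intro!: exI[of _ "k - 1"])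
qed

lemma emeasure_UN_mono_eq:
  fixes C :: "int \<Rightarrow> 'a set"
  assumes "mono C" and "\<And>m. C m \<in> sets M" and "\<And>m. emeasure M (C m) = emeasure M (C 0)"
  shows "emeasure M (\<Union>m. C m) = emeasure M (C 0)"
proof -
  have "(\<Union>m. C m) = (\<Union>n. C (int n))"
  proof (intro antisym subsetI)
    fix \<omega> assume "\<omega> \<in> (\<Union>m. C m)"
    then obtain m where "\<omega> \<in> C m" by blast
    moreover have "C m \<subseteq> C (int (nat m))"
      by (rule monoD[OF assms(1)]) simp
    ultimately show "\<omega> \<in> (\<Union>n. C (int n))" by blast
  qed blast
  moreover have "incseq (\<lambda>n. C (int n))"
    using assms(1) by (intro monoI) (simp add: monoD)
  then have "emeasure M (\<Union>n. C (int n)) = (SUP n. emeasure M (C (int n)))"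
    using assms(2) by (intro SUP_emeasure_incseq[symmetric]) auto
  also have "\<dots> = (SUP n::nat. emeasure M (C 0))"
    by (rule SUP_cong[OF refl assms(3)])
  ultimately show ?thesis by simp
qed

lemma emeasure_shift_invariant_eq_1:
  assumes "prob_space \<eta>" and "stationary_ergodic \<eta>"
    and "U \<in> sets \<eta>" and "shift -` U \<inter> space \<eta> = U" and "emeasure \<eta> U \<noteq> 0"
  shows "emeasure \<eta> U = 1"
proof -
  interpret prob_space \<eta> by fact
  have "measure \<eta> U \<noteq> 0"
    using assms(5) by (simp add: emeasure_eq_measure)
  then have "measure \<eta> U = 1"
    using assms(2-4) unfolding stationary_ergodic_def by blast
  then show ?thesis
    by (simp add: emeasure_eq_measure)
qed

lemma AE_shift_by_recurrent_left:
  assumes "prob_space \<eta>" and "stationary_ergodic \<eta>" and "sets \<eta> = sets env_space"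
    and "A \<in> sets \<eta>" and "emeasure \<eta> A \<noteq> 0"
  shows "AE \<omega> in \<eta>. \<forall>m. \<exists>k\<le>m. shift_by k \<omega> \<in> A"
proof -
  interpret prob_space \<eta> by fact
  have space: "space \<eta> = UNIV"
    using sets_eq_imp_space_eq[OF assms(3)] space_env_space by simp
  have measurable [measurable]: "shift_by k \<in> \<eta> \<rightarrow>\<^sub>M \<eta>" for k
    by (rule measurable_shift_by_sets_eq[OF assms(3)])
  define C where "C m = {\<omega>. \<exists>k\<le>m. shift_by k \<omega> \<in> A}" for m
  define U where "U = {\<omega>. \<exists>k. shift_by k \<omega> \<in> A}"
  have C_sets: "C m \<in> sets \<eta>" for m
  proof -
    have "C m = {\<omega> \<in> space \<eta>. \<exists>k\<le>m. shift_by k \<omega> \<in> A}"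
      by (simp add: C_def space)
    also have "\<dots> \<in> sets \<eta>"
      using assms(4) by measurable
    finally show ?thesis .
  qed
  have C_emeasure: "emeasure \<eta> (C m) = emeasure \<eta> (C 0)" for m
  proof -
    have "C m = shift_by m -` C 0 \<inter> space \<eta>"
      unfolding C_def space by (simp only: Int_UNIV_right shift_by_vimage_exists_le)
    also have "emeasure \<eta> \<dots> = emeasure (distr \<eta> \<eta> (shift_by m)) (C 0)"
      by (rule emeasure_distr[OF measurable C_sets, symmetric])
    finally show ?thesis
      by (simp only: distr_shift_by[OF assms(2,3)])
  qed
  moreover have "mono C"
    unfolding C_def by (intro monoI) (auto intro: order_trans)
  moreover have "U = (\<Union>m. C m)"
    unfolding U_def C_def by blast
  ultimately have U_emeasure: "emeasure \<eta> U = emeasure \<eta> (C 0)"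
    using emeasure_UN_mono_eq C_sets by metis
  have "U \<in> sets \<eta>"
    using \<open>U = (\<Union>m. C m)\<close> C_sets by auto
  moreover have "shift -` U \<inter> space \<eta> = U"
    unfolding U_def space by (simp only: Int_UNIV_right shift_vimage_exists)
  moreover have "A \<subseteq> U"
    unfolding U_def by (auto intro: exI[of _ 0] simp: shift_by_def)
  then have "emeasure \<eta> U \<noteq> 0"
    using emeasure_mono[OF _ \<open>U \<in> sets \<eta>\<close>, of A] assms(5) by (metis le_zero_eq)
  ultimately have "emeasure \<eta> U = 1"
    by (rule emeasure_shift_invariant_eq_1[OF assms(1,2)])
  then have "AE \<omega> in \<eta>. \<omega> \<in> C m" for m
    using U_emeasure C_emeasure C_sets
    by (simp add: AE_in_set_eq_1 emeasure_eq_measure)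
  then show ?thesis
    unfolding C_def by (simp add: AE_all_countable)
qed

section \<open>The critical exponent\<close>

lemma Max_row_sum_less_top_iff:
  fixes M :: "'i::finite \<Rightarrow> 'j::finite \<Rightarrow> ennreal"
  shows "Max (range (\<lambda>i. \<Sum>j\<in>UNIV. M i j)) < \<infinity> \<longleftrightarrow> (\<forall>i j. M i j < \<infinity>)"
  by (simp add: Max_less_iff)

lemma lambda_crit_altdef:
  "lambda_crit \<eta> = Sup {ereal lam | lam. AE \<omega> in \<eta>. \<forall>i j. Phi \<omega> 0 lam i j < \<infinity>}"
  unfolding lambda_crit_def Max_row_sum_less_top_iff ..

lemma Phi_0_le_1:
  assumes "range \<omega> \<subseteq> Sigma_set"
  shows "Phi \<omega> k 0 i j \<le> 1"
  unfolding Phi_def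
proof (rule suminf_le_const)
  fix N
  have "(\<Sum>n<N. hitp \<omega> (k + 1) n k i j) \<le> (\<Sum>n<N. \<Sum>j\<in>UNIV. hitp \<omega> (k + 1) n k i j)"
    using hitp_nonneg[OF assms] by (intro sum_mono member_le_sum) auto
  also have "\<dots> \<le> 1" by (rule sum_hitp_le_1[OF assms])
  finally show "(\<Sum>n<N. ennreal (exp (0 * real n) * hitp \<omega> (k + 1) n k i j)) \<le> 1"
    using hitp_nonneg[OF assms] by (simp add: ennreal_leI)
qed auto

lemma Phi_mono:
  assumes "range \<omega> \<subseteq> Sigma_set" and "lam \<le> lam'"
  shows "Phi \<omega> k lam i j \<le> Phi \<omega> k lam' i j"
  unfolding Phi_def
  using assms(2) hitp_nonneg[OF assms(1)]
  by (intro suminf_le allI ennreal_leI mult_right_mono) (auto intro: mult_right_mono)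

lemma lambda_crit_nonneg:
  assumes "AE \<omega> in \<eta>. range \<omega> \<subseteq> Sigma_set"
  shows "0 \<le> lambda_crit \<eta>"
proof -
  have "AE \<omega> in \<eta>. \<forall>i j. Phi \<omega> 0 0 i j < \<infinity>"
    using assms by eventually_elim (auto intro: le_less_trans[OF Phi_0_le_1])
  then show ?thesis
    unfolding lambda_crit_altdef zero_ereal_def by (intro Sup_upper) blast
qed

lemma AE_Phi_finite_below_lambda_crit:
  assumes "stationary_ergodic \<eta>" and "sets \<eta> = sets env_space"
    and "AE \<omega> in \<eta>. range \<omega> \<subseteq> Sigma_set" and "ereal lam < lambda_crit \<eta>"
  shows "AE \<omega> in \<eta>. \<forall>k i j. Phi \<omega> k lam i j < \<infinity>"
proof -
  obtain lam' where "lam < lam'" and finite_at_lam': "AE \<omega> in \<eta>. \<forall>i j. Phi \<omega> 0 lam' i j < \<infinity>"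
    using assms(4) unfolding lambda_crit_altdef less_Sup_iff by auto
  have "AE \<omega> in \<eta>. \<forall>i j. Phi \<omega> 0 lam i j < \<infinity>"
    using finite_at_lam' assms(3)
    by eventually_elim (meson Phi_mono \<open>lam < lam'\<close> le_less_trans less_imp_le)
  then have "AE \<omega> in \<eta>. \<forall>i j. Phi \<omega> k lam i j < \<infinity>" for k
    using AE_shift_by[OF assms(1,2), of "\<lambda>\<omega>. \<forall>i j. Phi \<omega> 0 lam i j < \<infinity>" k]
    by (simp add: Phi_shift_by)
  then show ?thesis
    by (simp add: AE_all_countable)
qed

lemma AE_Phi_infinite_above_lambda_crit:
  assumes "prob_space \<eta>" and "stationary_ergodic \<eta>" and "sets \<eta> = sets env_space"
    and "0 < \<kappa>" and "AE \<omega> in \<eta>. range \<omega> \<subseteq> Sigma_kappa \<kappa>" and "lambda_crit \<eta> < ereal lam"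
  shows "AE \<omega> in \<eta>. \<forall>k i j. Phi \<omega> k lam i j = \<infinity>"
proof -
  define A where "A = {\<omega> \<in> space \<eta>. \<exists>i j. Phi \<omega> 0 lam i j = \<infinity>}"
  have [measurable]: "(\<lambda>\<omega>. Phi \<omega> k lam i j) \<in> borel_measurable \<eta>" for k i j
    using borel_measurable_Phi measurable_cong_sets[OF assms(3) refl] by blast
  have "A \<in> sets \<eta>"
    unfolding A_def by measurable
  have "\<not> (AE \<omega> in \<eta>. \<forall>i j. Phi \<omega> 0 lam i j < \<infinity>)"
  proof
    assume "AE \<omega> in \<eta>. \<forall>i j. Phi \<omega> 0 lam i j < \<infinity>"
    then have "ereal lam \<le> lambda_crit \<eta>"
      unfolding lambda_crit_altdef by (intro Sup_upper) blast
    with assms(6) show False by simp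
  qed
  then have "emeasure \<eta> A \<noteq> 0"
    using AE_iff_measurable[OF \<open>A \<in> sets \<eta>\<close>, of "\<lambda>\<omega>. \<forall>i j. Phi \<omega> 0 lam i j < \<infinity>"]
    unfolding A_def by (auto simp: less_top[symmetric])
  then have "AE \<omega> in \<eta>. \<forall>m. \<exists>k\<le>m. shift_by k \<omega> \<in> A"
    by (rule AE_shift_by_recurrent_left[OF assms(1-3) \<open>A \<in> sets \<eta>\<close>])
  with assms(5) show ?thesis
  proof eventually_elim
    case (elim \<omega>)
    show ?case
    proof (intro allI)
      fix k' i j
      obtain k where "k \<le> k' - 1" and "shift_by k \<omega> \<in> A"
        using elim(2) by blast
      moreover from this(2) obtain a b where "Phi \<omega> k lam a b = \<infinity>"
        by (auto simp: A_def Phi_shift_by)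
      ultimately show "Phi \<omega> k' lam i j = \<infinity>"
        using Phi_eq_top_right[OF elim(1) assms(4)] by simp
    qed
  qed
qed

theorem mainTheorem5:
  fixes \<eta> :: "'d::finite env measure" and \<kappa> :: real
  assumes "prob_space \<eta>"
    and "sets \<eta> = sets env_space"
    and A1: "stationary_ergodic \<eta>"
    and A2: "\<kappa> > 0" "AE \<omega> in \<eta>. \<forall>n. \<omega> n \<in> Sigma_kappa \<kappa>"
  shows "lambda_crit \<eta> \<ge> 0
     \<and> (\<forall>lam. ereal lam < lambda_crit \<eta> \<longrightarrow>
           (AE \<omega> in \<eta>. \<forall>k i j. Phi \<omega> k lam i j < \<infinity>))
     \<and> (\<forall>lam. ereal lam > lambda_crit \<eta> \<longrightarrow>
           (AE \<omega> in \<eta>. \<forall>k i j. Phi \<omega> k lam i j = \<infinity>))"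
proof -
  have uniformly_elliptic: "AE \<omega> in \<eta>. range \<omega> \<subseteq> Sigma_kappa \<kappa>"
    using A2(2) by (simp add: image_subset_iff)
  then have stochastic: "AE \<omega> in \<eta>. range \<omega> \<subseteq> Sigma_set"
    by eventually_elim (use Sigma_kappa_subset_Sigma_set in blast)
  show ?thesis
    using lambda_crit_nonneg[OF stochastic]
      AE_Phi_finite_below_lambda_crit[OF A1 assms(2) stochastic]
      AE_Phi_infinite_above_lambda_crit[OF assms(1) A1 assms(2) A2(1) uniformly_elliptic]
    by blast
qed

end
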